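(* Let $\mathbf{v}_0\in\mathbb{R}^d_{\ge0}\setminus\{\mathbf{0}\}$ be fixed, for $u>0$ let $J:=\mathbf{v}_0+u\Delta_d$, and let $f(\mathbf{x}):=\log\left(\frac1d\sum_{j=1}^d e^{x_j}\right)$. Then $$\lim_{u\to\infty}\frac{\operatorname{vol}(P^0(f,J))-\operatorname{vol}(P(f,J))}{\operatorname{vol}(P^0(f,J))}=0.$$
   Context: $\Delta_d:=\{\mathbf{x}\in\mathbb{R}^d_{\ge0}:\sum_{j=1}^d x_j\le1\}$ is the standard $d$-simplex, so $J$ is the $d$-simplex with vertices $\mathbf{v}_0,\mathbf{v}_0+u\mathbf{e}_1,\dots,\mathbf{v}_0+u\mathbf{e}_d$. Let $\mu$ be the unique affine function agreeing with $f$ at the vertices of $J$ and $\mu(\mathbf{x},z):=z\mu(\mathbf{x}/z)$ (extended linearly in $(\mathbf{x},z)$). For $z\ge0$, $z\cdot J:=\{z\mathbf{x}:\mathbf{x}\in J\}$. Perspective relaxation: $P(f,J):=\operatorname{cl}\{(\mathbf{x},y,z)\in\mathbb{R}^d\times\mathbb{R}\times\mathbb{R}:\mu(\mathbf{x},z)\ge y\ge zf(\mathbf{x}/z),\ \mathbf{x}\in z\cdot J,\ 1\ge z>0\}$. Naive relaxation: $P^0(f,J):=\{(\mathbf{x},y,z)\in\mathbb{R}^d\times\mathbb{R}\times\mathbb{R}:\mu(\mathbf{x},z)\ge y\ge f(\mathbf{x}),\ \mathbf{x}\in z\cdot J,\ 1\ge z\ge0\}$. $\operatorname{vol}$ is $(d+2)$-dimensional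 Lebesgue measure. *)

theory Defs
  imports "HOL-Analysis.Analysis"
begin

definition std_simplex :: "(real ^ 'n) set" where
  "std_simplex = {x. (\<forall>j. 0 \<le> x $ j) \<and> (\<Sum>j\<in>UNIV. x $ j) \<le> 1}"

definition simplexJ :: "real ^ 'n \<Rightarrow> real \<Rightarrow> (real ^ 'n) set" where
  "simplexJ v0 u = {v0 + u *\<^sub>R x | x. x \<in> std_simplex}"

definition lme :: "real ^ 'n \<Rightarrow> real" where
  "lme x = ln ((1 / real CARD('n)) * (\<Sum>j\<in>UNIV. exp (x $ j)))"

definition affine_interp :: "(real ^ 'n \<Rightarrow> real) \<Rightarrow> real ^ 'n \<Rightarrow> real \<Rightarrow> (real ^ 'n \<Rightarrow> real)" where
  "affine_interp f v0 u = (THE g. (\<exists>a b. g = (\<lambda>x. a \<bullet> x + b)) \<and>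
       g v0 = f v0 \<and> (\<forall>j. g (v0 + u *\<^sub>R axis j 1) = f (v0 + u *\<^sub>R axis j 1)))"

text \<open>Homogenisation mu(x,z) := z mu(x/z), extended linearly in (x,z);
  for affine mu this is (mu x - mu 0) + z * mu 0.\<close>
definition homog :: "(real ^ 'n \<Rightarrow> real) \<Rightarrow> real ^ 'n \<Rightarrow> real \<Rightarrow> real" where
  "homog g x z = (g x - g 0) + z * g 0"

definition scaleset :: "real \<Rightarrow> (real ^ 'n) set \<Rightarrow> (real ^ 'n) set" where
  "scaleset z J = {z *\<^sub>R x | x. x \<in> J}"

definition persp_relax :: "(real ^ 'n \<Rightarrow> real) \<Rightarrow> real ^ 'n \<Rightarrow> real \<Rightarrow> ((real ^ 'n) \<times> real \<times> real) set" where
  "persp_relax f v0 u = closure ({(x, y, z). homog (affine_interp f v0 u) x z \<ge> y \<and>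
       y \<ge> z * f ((1 / z) *\<^sub>R x) \<and> x \<in> scaleset z (simplexJ v0 u) \<and> 1 \<ge> z \<and> z > 0} :: ((real ^ 'n) \<times> real \<times> real) set)"

definition naive_relax :: "(real ^ 'n \<Rightarrow> real) \<Rightarrow> real ^ 'n \<Rightarrow> real \<Rightarrow> ((real ^ 'n) \<times> real \<times> real) set" where
  "naive_relax f v0 u = {(x, y, z). homog (affine_interp f v0 u) x z \<ge> y \<and>
       y \<ge> f x \<and> x \<in> scaleset z (simplexJ v0 u) \<and> 1 \<ge> z \<and> z \<ge> 0}"

end

theory Submission
  imports Defs
begin

text \<open>Since \<open>max\<^sub>j x\<^sub>j - ln d \<le> lme x \<le> max\<^sub>j x\<^sub>j\<close> and the maximum is positively homogeneous,
  the perspective \<open>z lme (x / z)\<close> stays within \<open>ln d\<close> of \<open>lme x\<close>. Hence the naive and the perspective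
  relaxation differ only inside the band \<open>|y - lme x| \<le> ln d\<close> over the box \<open>[0, v0 + u] \<times> [0, 1]\<close>,
  so their volumes differ by at most \<open>2 ln d (|v0|\<^sub>1 + u)\<^sup>d\<close>. For \<open>d \<ge> 2\<close> the secant hyperplane of
  \<open>lme\<close> through the vertices of \<open>J\<close> has all slopes close to \<open>1\<close> and lies a distance of order \<open>u\<close>
  above \<open>lme\<close> on a cube of side \<open>u / (16 d)\<close>, so the naive relaxation has volume of order \<open>u\<^sup>d\<^sup>+\<^sup>1\<close>
  and the relative difference is \<open>O(1 / u)\<close>. For \<open>d = 1\<close> we have \<open>ln d = 0\<close> and the difference
  vanishes.\<close>

lemma lme_le:
  fixes x :: "real ^ 'n"
  assumes "\<And>j. x $ j \<le> c"
  shows "lme x \<le> c"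
proof -
  have "(\<Sum>j\<in>UNIV. exp (x $ j)) \<le> (\<Sum>j\<in>(UNIV::'n set). exp c)"
    by (intro sum_mono) (use assms in auto)
  then have "(1 / real CARD('n)) * (\<Sum>j\<in>UNIV. exp (x $ j)) \<le> exp c"
    by (simp add: field_simps)
  moreover have "0 < (1 / real CARD('n)) * (\<Sum>j\<in>UNIV. exp (x $ j))"
    by (intro mult_pos_pos sum_pos) auto
  ultimately show ?thesis
    unfolding lme_def by (metis ln_exp ln_le_cancel_iff exp_gt_zero)
qed

lemma component_le_lme:
  fixes x :: "real ^ 'n"
  shows "x $ j - ln (real CARD('n)) \<le> lme x"
proof -
  have "exp (x $ j) \<le> (\<Sum>j\<in>UNIV. exp (x $ j))"
    by (rule member_le_sum) auto
  then have "exp (x $ j) / real CARD('n) \<le> (1 / real CARD('n)) * (\<Sum>j\<in>UNIV. exp (x $ j))"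
    by (simp add: divide_right_mono)
  then have "ln (exp (x $ j) / real CARD('n)) \<le> lme x"
    unfolding lme_def by (subst ln_le_cancel_iff) (auto intro!: divide_pos_pos sum_pos)
  then show ?thesis
    by (simp add: ln_div)
qed

lemma lme_zero [simp]: "lme (0 :: real ^ 'n) = 0"
  unfolding lme_def by simp

lemma continuous_on_lme: "continuous_on A (lme :: real ^ 'n \<Rightarrow> real)"
proof -
  have "(\<Sum>j\<in>UNIV. exp (x $ j)) \<noteq> 0" for x :: "real ^ 'n"
    using sum_pos[of UNIV "\<lambda>j. exp (x $ j)"] by auto
  then show ?thesis
    unfolding lme_def[abs_def] by (intro continuous_intros) auto
qed

text \<open>Both terms lie within \<open>ln d\<close> below the largest component of \<open>x\<close>.\<close>
lemma lme_perspective_close: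
  fixes x :: "real ^ 'n"
  assumes "0 < z" "z \<le> 1"
  shows "\<bar>z * lme ((1 / z) *\<^sub>R x) - lme x\<bar> \<le> ln (real CARD('n))"
proof -
  obtain m where m: "\<And>j. x $ j \<le> x $ m"
  proof -
    have "Max (range (($) x)) \<in> range (($) x)"
      by (intro Max_in) auto
    then obtain m where "Max (range (($) x)) = x $ m"
      by blast
    moreover have "x $ j \<le> Max (range (($) x))" for j
      by (intro Max_ge) auto
    ultimately show thesis
      using that by metis
  qed
  have "lme x \<le> x $ m" "x $ m - ln (real CARD('n)) \<le> lme x"
    using m by (auto intro: lme_le component_le_lme)
  moreover have "lme ((1 / z) *\<^sub>R x) \<le> x $ m / z"
    using m assms by (intro lme_le) (simp add: divide_right_mono)
  moreover have "x $ m / z - ln (real CARD('n)) \<le> lme ((1 / z) *\<^sub>R x)"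
    using component_le_lme[of "(1 / z) *\<^sub>R x" m] by simp
  ultimately have "z * lme ((1 / z) *\<^sub>R x) \<le> x $ m"
      "x $ m - z * ln (real CARD('n)) \<le> z * lme ((1 / z) *\<^sub>R x)"
    using assms by (simp_all add: pos_le_divide_eq pos_divide_le_eq algebra_simps)
  moreover have "z * ln (real CARD('n)) \<le> ln (real CARD('n))"
    using assms by (simp add: mult_left_le_one_le)
  ultimately show ?thesis
    using \<open>lme x \<le> x $ m\<close> \<open>x $ m - ln (real CARD('n)) \<le> lme x\<close> by linarith
qed

definition interp_slope :: "(real ^ 'n \<Rightarrow> real) \<Rightarrow> real ^ 'n \<Rightarrow> real \<Rightarrow> real ^ 'n" where
  "interp_slope f v0 u = (\<chi> j. (f (v0 + u *\<^sub>R axis j 1) - f v0) / u)"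

lemma affine_interp_eq:
  assumes "u \<noteq> 0"
  shows "affine_interp f v0 u = (\<lambda>x. interp_slope f v0 u \<bullet> (x - v0) + f v0)"
  unfolding affine_interp_def
proof (rule the_equality)
  let ?a = "interp_slope f v0 u"
  have "(\<lambda>x. ?a \<bullet> (x - v0) + f v0) = (\<lambda>x. ?a \<bullet> x + (f v0 - ?a \<bullet> v0))"
    by (simp add: fun_eq_iff inner_diff_right)
  moreover have "?a \<bullet> (v0 + u *\<^sub>R axis j 1 - v0) + f v0 = f (v0 + u *\<^sub>R axis j 1)" for j
    using assms by (simp add: inner_axis interp_slope_def)
  ultimately show "(\<exists>a b. (\<lambda>x. ?a \<bullet> (x - v0) + f v0) = (\<lambda>x. a \<bullet> x + b)) \<and>
      ?a \<bullet> (v0 - v0) + f v0 = f v0 \<and>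
      (\<forall>j. ?a \<bullet> (v0 + u *\<^sub>R axis j 1 - v0) + f v0 = f (v0 + u *\<^sub>R axis j 1))"
    by auto
next
  fix g
  assume "(\<exists>a b. g = (\<lambda>x. a \<bullet> x + b)) \<and> g v0 = f v0 \<and>
      (\<forall>j. g (v0 + u *\<^sub>R axis j 1) = f (v0 + u *\<^sub>R axis j 1))"
  then obtain a b where g: "g = (\<lambda>x. a \<bullet> x + b)" and g0: "a \<bullet> v0 + b = f v0"
    and gj: "\<And>j. a \<bullet> (v0 + u *\<^sub>R axis j 1) + b = f (v0 + u *\<^sub>R axis j 1)"
    by auto
  have "a $ j = interp_slope f v0 u $ j" for j
    using gj[of j] g0 assms by (auto simp: inner_add_right inner_axis interp_slope_def field_simps)
  then have "a = interp_slope f v0 u"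
    by (simp add: vec_eq_iff)
  then show "g = (\<lambda>x. interp_slope f v0 u \<bullet> (x - v0) + f v0)"
    using g g0 by (auto simp: inner_diff_right)
qed

lemma homog_affine_interp:
  assumes "u \<noteq> 0"
  shows "homog (affine_interp f v0 u) x z = interp_slope f v0 u \<bullet> (x - z *\<^sub>R v0) + z * f v0"
  using assms by (simp add: affine_interp_eq homog_def inner_diff_right algebra_simps)

lemma mem_scaleset_simplexJ_iff:
  fixes v0 x :: "real ^ 'n"
  assumes u: "0 < u" and z: "0 \<le> z"
  shows "x \<in> scaleset z (simplexJ v0 u) \<longleftrightarrow>
    (\<forall>j. z * v0 $ j \<le> x $ j) \<and> (\<Sum>j\<in>UNIV. x $ j - z * v0 $ j) \<le> z * u"
proof
  assume "x \<in> scaleset z (simplexJ v0 u)"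
  then obtain w where w: "w \<in> std_simplex" and x: "x = z *\<^sub>R (v0 + u *\<^sub>R w)"
    by (auto simp: scaleset_def simplexJ_def)
  have e: "x $ j - z * v0 $ j = z * u * w $ j" for j
    using x by (simp add: algebra_simps)
  have "(\<Sum>j\<in>UNIV. x $ j - z * v0 $ j) = z * u * (\<Sum>j\<in>UNIV. w $ j)"
    by (simp add: e sum_distrib_left)
  also have "\<dots> \<le> z * u"
    using w u z by (intro mult_left_le) (auto simp: std_simplex_def)
  finally show "(\<forall>j. z * v0 $ j \<le> x $ j) \<and> (\<Sum>j\<in>UNIV. x $ j - z * v0 $ j) \<le> z * u"
    using e w u z by (auto simp: std_simplex_def) (metis diff_ge_0_iff_ge mult_nonneg_nonneg less_imp_le)
next
  assume h: "(\<forall>j. z * v0 $ j \<le> x $ j) \<and> (\<Sum>j\<in>UNIV. x $ j - z * v0 $ j) \<le> z * u"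
  show "x \<in> scaleset z (simplexJ v0 u)"
  proof (cases "z = 0")
    case True
    with h have "\<forall>j\<in>UNIV. x $ j = 0"
      by (subst sum_nonneg_eq_0_iff[symmetric]) (auto intro: order.antisym sum_nonneg)
    then have "x = 0 *\<^sub>R (v0 + u *\<^sub>R 0)"
      by (simp add: vec_eq_iff)
    moreover have "(0 :: real ^ 'n) \<in> std_simplex"
      by (simp add: std_simplex_def)
    ultimately show ?thesis
      using True unfolding scaleset_def simplexJ_def by blast
  next
    case False
    with z have zp: "0 < z" by simp
    define w where "w = (1 / (z * u)) *\<^sub>R (x - z *\<^sub>R v0)"
    have wj: "w $ j = (x $ j - z * v0 $ j) / (z * u)" for j
      by (simp add: w_def)
    have "(\<Sum>j\<in>UNIV. w $ j) = (\<Sum>j\<in>UNIV. x $ j - z * v0 $ j) / (z * u)"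
      by (simp add: wj sum_divide_distrib)
    then have "w \<in> std_simplex"
      using h zp u by (simp add: std_simplex_def wj divide_le_eq_1)
    moreover have "x = z *\<^sub>R (v0 + u *\<^sub>R w)"
      using zp u by (simp add: vec_eq_iff wj field_simps)
    ultimately show ?thesis
      unfolding scaleset_def simplexJ_def by blast
  qed
qed

lemma scaleset_zero_eq: "x \<in> scaleset 0 J \<Longrightarrow> x = 0"
  by (auto simp: scaleset_def)

lemma scaleset_subset_convex:
  assumes "convex C" "0 \<in> C" "J \<subseteq> C" "0 \<le> z" "z \<le> 1"
  shows "scaleset z J \<subseteq> C"
proof
  fix x
  assume "x \<in> scaleset z J"
  then obtain w where "w \<in> C" "x = z *\<^sub>R w"
    using assms(3) by (auto simp: scaleset_def)
  then show "x \<in> C"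
    using convexD[OF assms(1,2) \<open>w \<in> C\<close>, of "1 - z" z] assms(4,5) by simp
qed

lemma simplexJ_subset_cbox:
  fixes v0 :: "real ^ 'n"
  assumes "\<forall>j. 0 \<le> v0 $ j" "0 \<le> u"
  shows "simplexJ v0 u \<subseteq> cbox 0 (\<chi> j. v0 $ j + u)"
proof
  fix x
  assume "x \<in> simplexJ v0 u"
  then obtain w where w: "w \<in> std_simplex" and x: "x = v0 + u *\<^sub>R w"
    by (auto simp: simplexJ_def)
  have "w $ j \<le> (\<Sum>k\<in>UNIV. w $ k)" for j
    using w by (intro member_le_sum) (auto simp: std_simplex_def)
  then have "0 \<le> w $ j \<and> w $ j \<le> 1" for j
    using w by (auto simp: std_simplex_def intro: order_trans)
  then show "x \<in> cbox 0 (\<chi> j. v0 $ j + u)"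
    using assms unfolding x mem_box_cart by (auto intro: mult_left_le)
qed

lemma scaleset_simplexJ_subset_cbox:
  fixes v0 :: "real ^ 'n"
  assumes "\<forall>j. 0 \<le> v0 $ j" "0 \<le> u" "0 \<le> z" "z \<le> 1"
  shows "scaleset z (simplexJ v0 u) \<subseteq> cbox 0 (\<chi> j. v0 $ j + u)"
  using assms
  by (intro scaleset_subset_convex simplexJ_subset_cbox convex_box) (auto simp: mem_box_cart)

definition graph_slab ::
    "'a set \<Rightarrow> ('a \<Rightarrow> real) \<Rightarrow> real \<Rightarrow> real \<Rightarrow> real \<Rightarrow> real \<Rightarrow> ('a \<times> real \<times> real) set" where
  "graph_slab A g c1 c2 z1 z2 =
    {(x, y, z). x \<in> A \<and> g x + c1 \<le> y \<and> y \<le> g x + c2 \<and> z1 \<le> z \<and> z \<le> z2}"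

lemma graph_slab_eq_image:
  "graph_slab A g c1 c2 z1 z2 = (\<lambda>(x, c, z). (x, g x + c, z)) ` (A \<times> {c1..c2} \<times> {z1..z2})"
proof (intro set_eqI iffI)
  fix p
  assume "p \<in> graph_slab A g c1 c2 z1 z2"
  then obtain x y z where "p = (x, y, z)" "x \<in> A" "g x + c1 \<le> y" "y \<le> g x + c2" "z1 \<le> z" "z \<le> z2"
    by (auto simp: graph_slab_def)
  then show "p \<in> (\<lambda>(x, c, z). (x, g x + c, z)) ` (A \<times> {c1..c2} \<times> {z1..z2})"
    by (intro image_eqI[of _ _ "(x, y - g x, z)"]) auto
qed (auto simp: graph_slab_def)

lemma compact_graph_slab:
  fixes g :: "'a::topological_space \<Rightarrow> real"
  assumes "compact A" "continuous_on A g"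
  shows "compact (graph_slab A g c1 c2 z1 z2)"
  unfolding graph_slab_eq_image split_def
  by (intro compact_continuous_image compact_Times compact_Icc assms(1) continuous_intros
      continuous_on_compose2[OF assms(2)]) auto

lemma emeasure_graph_slab:
  fixes A :: "'a::euclidean_space set"
  assumes A: "compact A" and g: "continuous_on A g" and "c1 \<le> c2" "z1 \<le> z2"
  shows "emeasure lborel (graph_slab A g c1 c2 z1 z2) = emeasure lborel A * ennreal ((c2 - c1) * (z2 - z1))"
proof -
  let ?D = "graph_slab A g c1 c2 z1 z2"
  have D: "?D \<in> sets (lborel \<Otimes>\<^sub>M lborel)"
    unfolding lborel_prod by (simp add: borel_compact compact_graph_slab[OF A g])
  have rect: "emeasure lborel ({a..b} \<times> {c..d}) = ennreal ((b - a) * (d - c))"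
    if "a \<le> b" "c \<le> d" for a b c d :: real
  proof -
    have "emeasure lborel ({a..b} \<times> {c..d}) = emeasure (lborel \<Otimes>\<^sub>M lborel) ({a..b} \<times> {c..d})"
      by (simp add: lborel_prod)
    then show ?thesis
      using that by (simp add: lborel.emeasure_pair_measure_Times ennreal_mult)
  qed
  have "emeasure lborel ?D = emeasure (lborel \<Otimes>\<^sub>M lborel) ?D"
    by (simp add: lborel_prod)
  also have "\<dots> = (\<integral>\<^sup>+x. emeasure lborel (Pair x -` ?D) \<partial>lborel)"
    by (rule lborel.emeasure_pair_measure_alt[OF D])
  also have "\<dots> = (\<integral>\<^sup>+x. ennreal ((c2 - c1) * (z2 - z1)) * indicator A x \<partial>lborel)"
  proof (rule nn_integral_cong)
    fix x
    have "Pair x -` ?D = (if x \<in> A then {g x + c1..g x + c2} \<times> {z1..z2} else {})"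
      by (auto simp: graph_slab_def)
    then show "emeasure lborel (Pair x -` ?D) = ennreal ((c2 - c1) * (z2 - z1)) * indicator A x"
      using assms(3,4) by (simp add: rect)
  qed
  also have "\<dots> = ennreal ((c2 - c1) * (z2 - z1)) * emeasure lborel A"
    using A by (simp add: nn_integral_cmult_indicator borel_compact)
  finally show ?thesis
    by (simp add: mult.commute)
qed

lemma measure_graph_slab:
  fixes A :: "'a::euclidean_space set"
  assumes A: "compact A" and g: "continuous_on A g" and "c1 \<le> c2" "z1 \<le> z2"
  shows "measure lborel (graph_slab A g c1 c2 z1 z2) = measure lborel A * ((c2 - c1) * (z2 - z1))"
proof -
  have "emeasure lborel (graph_slab A g c1 c2 z1 z2) = ennreal (measure lborel A * ((c2 - c1) * (z2 - z1)))"
    using emeasure_graph_slab[OF assms] assms(3,4)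
    by (simp add: emeasure_eq_measure2[OF fmeasurable_compact[OF A]] ennreal_mult)
  then show ?thesis
    using assms(3,4) by (simp add: measure_def)
qed

lemma mem_naive_relax_iff:
  fixes v0 x :: "real ^ 'n"
  assumes "0 < u"
  shows "(x, y, z) \<in> naive_relax f v0 u \<longleftrightarrow>
    f x \<le> y \<and> y \<le> interp_slope f v0 u \<bullet> (x - z *\<^sub>R v0) + z * f v0 \<and>
    (\<forall>j. z * v0 $ j \<le> x $ j) \<and> (\<Sum>j\<in>UNIV. x $ j - z * v0 $ j) \<le> z * u \<and> 0 \<le> z \<and> z \<le> 1"
  using assms by (auto simp: naive_relax_def homog_affine_interp mem_scaleset_simplexJ_iff)

lemma closed_naive_relax:
  fixes v0 :: "real ^ 'n"
  assumes "0 < u" "continuous_on UNIV f"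
  shows "closed (naive_relax f v0 u)"
proof -
  have "naive_relax f v0 u = {p. f (fst p) \<le> fst (snd p) \<and>
      fst (snd p) \<le> interp_slope f v0 u \<bullet> (fst p - snd (snd p) *\<^sub>R v0) + snd (snd p) * f v0 \<and>
      (\<forall>j. snd (snd p) * v0 $ j \<le> fst p $ j) \<and>
      (\<Sum>j\<in>UNIV. fst p $ j - snd (snd p) * v0 $ j) \<le> snd (snd p) * u \<and>
      0 \<le> snd (snd p) \<and> snd (snd p) \<le> 1}"
    by (simp add: set_eq_iff split_paired_All mem_naive_relax_iff[OF assms(1)])
  then show ?thesis
    by (simp only:) (intro closed_Collect_conj closed_Collect_le closed_Collect_all continuous_intros
        continuous_on_compose2[OF assms(2)]; simp)
qed

lemma naive_relax_subset_graph_slab: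
  fixes v0 :: "real ^ 'n"
  assumes v0: "\<forall>j. 0 \<le> v0 $ j" and u: "0 < u" and f: "continuous_on UNIV f"
  obtains C where "naive_relax f v0 u \<subseteq> graph_slab (cbox 0 (\<chi> j. v0 $ j + u)) f 0 C 0 1"
proof -
  let ?K = "cbox 0 (\<chi> j. v0 $ j + u) \<times> {0..1::real}"
  let ?h = "\<lambda>(x, z). interp_slope f v0 u \<bullet> (x - z *\<^sub>R v0) + z * f v0 - f x"
  have "continuous_on ?K ?h"
    unfolding split_def
    by (intro continuous_intros continuous_on_compose2[OF f]) auto
  moreover have "(0, 0) \<in> ?K"
    using v0 u by (simp add: mem_box_cart)
  ultimately obtain q where q: "\<And>p. p \<in> ?K \<Longrightarrow> ?h p \<le> ?h q"
    using continuous_attains_sup[of ?K ?h] compact_Times[OF compact_cbox compact_Icc] by blast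
  show thesis
  proof (rule that[of "?h q"], safe)
    fix x y z
    assume "(x, y, z) \<in> naive_relax f v0 u"
    then have "x \<in> scaleset z (simplexJ v0 u)" "0 \<le> z" "z \<le> 1" "f x \<le> y"
      "y \<le> interp_slope f v0 u \<bullet> (x - z *\<^sub>R v0) + z * f v0"
      using u by (auto simp: naive_relax_def homog_affine_interp)
    moreover from this have "x \<in> cbox 0 (\<chi> j. v0 $ j + u)"
      using scaleset_simplexJ_subset_cbox[OF v0 less_imp_le[OF u] \<open>0 \<le> z\<close> \<open>z \<le> 1\<close>] by blast
    ultimately show "(x, y, z) \<in> graph_slab (cbox 0 (\<chi> j. v0 $ j + u)) f 0 (?h q) 0 1"
      using q[of "(x, z)"] by (auto simp: graph_slab_def)
  qed
qed

lemma compact_naive_relax: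
  fixes v0 :: "real ^ 'n"
  assumes "\<forall>j. 0 \<le> v0 $ j" "0 < u" "continuous_on UNIV f"
  shows "compact (naive_relax f v0 u)"
proof -
  obtain C where C: "naive_relax f v0 u \<subseteq> graph_slab (cbox 0 (\<chi> j. v0 $ j + u)) f 0 C 0 1"
    using naive_relax_subset_graph_slab[OF assms] .
  have "compact (graph_slab (cbox 0 (\<chi> j. v0 $ j + u)) f 0 C 0 1 \<inter> naive_relax f v0 u)"
    using assms(3) by (intro compact_Int_closed compact_graph_slab closed_naive_relax assms(2))
      (auto intro: continuous_on_subset)
  with C show ?thesis
    by (simp add: Int_absorb1)
qed

text \<open>For \<open>z > 0\<close> the two relaxations share all constraints except the lower bound on \<open>y\<close>, and
  these bounds differ by at most \<open>\<delta>\<close>; at \<open>z = 0\<close> the naive relaxation is the point \<open>(0, 0, 0)\<close>.\<close>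
lemma naive_relax_persp_relax_diff_subset:
  fixes f :: "real ^ 'n \<Rightarrow> real" and v0 :: "real ^ 'n"
  assumes v0: "\<forall>j. 0 \<le> v0 $ j" and u: "0 < u" and f: "continuous_on UNIV f" "f 0 = 0"
    and gap: "\<And>x z. 0 < z \<Longrightarrow> z \<le> 1 \<Longrightarrow> \<bar>z * f ((1 / z) *\<^sub>R x) - f x\<bar> \<le> \<delta>"
  defines "E \<equiv> graph_slab (cbox 0 (\<chi> j. v0 $ j + u)) f (- \<delta>) \<delta> 0 1"
  shows "naive_relax f v0 u - persp_relax f v0 u \<subseteq> E"
    and "persp_relax f v0 u - naive_relax f v0 u \<subseteq> E"
proof -
  let ?N = "naive_relax f v0 u"
  define S where "S = {(x, y, z). homog (affine_interp f v0 u) x z \<ge> y \<and>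
       y \<ge> z * f ((1 / z) *\<^sub>R x) \<and> x \<in> scaleset z (simplexJ v0 u) \<and> 1 \<ge> z \<and> z > 0}"
  have P: "persp_relax f v0 u = closure S"
    by (simp add: persp_relax_def S_def)
  have "0 \<le> \<delta>"
    using gap[of 1 0] by simp
  have box: "x \<in> cbox 0 (\<chi> j. v0 $ j + u)" if "x \<in> scaleset z (simplexJ v0 u)" "0 \<le> z" "z \<le> 1" for x z
    using scaleset_simplexJ_subset_cbox[OF v0 less_imp_le[OF u] that(2,3)] that(1) by blast
  have "S \<subseteq> ?N \<union> E"
  proof safe
    fix x y z
    assume "(x, y, z) \<in> S" "(x, y, z) \<notin> E"
    then show "(x, y, z) \<in> ?N"
      using gap[of z x] box[of x z] by (force simp: S_def E_def naive_relax_def graph_slab_def)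
  qed
  moreover have "closed (?N \<union> E)"
    unfolding E_def using f(1)
    by (intro closed_Un closed_naive_relax u compact_imp_closed compact_graph_slab compact_cbox)
      (auto intro: continuous_on_subset)
  ultimately show "persp_relax f v0 u - ?N \<subseteq> E"
    unfolding P using closure_minimal by blast
  have "?N - S \<subseteq> E"
  proof safe
    fix x y z
    assume N: "(x, y, z) \<in> ?N" and "(x, y, z) \<notin> S"
    show "(x, y, z) \<in> E"
    proof (cases "z = 0")
      case True
      with N have "x = 0"
        by (auto simp: naive_relax_def dest: scaleset_zero_eq)
      with N True f(2) have "y = 0"
        by (auto simp: naive_relax_def homog_def)
      with \<open>x = 0\<close> True show ?thesis
        using \<open>0 \<le> \<delta>\<close> f(2) v0 u by (simp add: E_def graph_slab_def mem_box_cart add_nonneg_pos less_imp_le)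
    next
      case False
      then show ?thesis
        using N \<open>(x, y, z) \<notin> S\<close> gap[of z x] box[of x z]
        by (force simp: S_def E_def naive_relax_def graph_slab_def)
    qed
  qed
  then show "?N - persp_relax f v0 u \<subseteq> E"
    unfolding P using closure_subset by blast
qed

lemma abs_measure_diff_le:
  assumes "A \<in> fmeasurable M" "B \<in> fmeasurable M" "E \<in> fmeasurable M" "A - B \<subseteq> E" "B - A \<subseteq> E"
  shows "\<bar>measure M A - measure M B\<bar> \<le> measure M E"
proof -
  have "measure M A - measure M B \<le> measure M E"
    using measure_diff_le_measure_setdiff[OF assms(1,2)] assms
    by (smt (verit) fmeasurable.Diff fmeasurableD measure_mono_fmeasurable)
  moreover have "measure M B - measure M A \<le> measure M E"
    using measure_diff_le_measure_setdiff[OF assms(2,1)] assms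
    by (smt (verit) fmeasurable.Diff fmeasurableD measure_mono_fmeasurable)
  ultimately show ?thesis
    by linarith
qed

lemma naive_relax_persp_relax_measure_diff_le:
  fixes f :: "real ^ 'n \<Rightarrow> real" and v0 :: "real ^ 'n"
  assumes v0: "\<forall>j. 0 \<le> v0 $ j" and u: "0 < u" and f: "continuous_on UNIV f" "f 0 = 0"
    and gap: "\<And>x z. 0 < z \<Longrightarrow> z \<le> 1 \<Longrightarrow> \<bar>z * f ((1 / z) *\<^sub>R x) - f x\<bar> \<le> \<delta>"
  shows "\<bar>measure lborel (naive_relax f v0 u) - measure lborel (persp_relax f v0 u)\<bar>
    \<le> 2 * \<delta> * measure lborel (cbox 0 (\<chi> j. v0 $ j + u))"
proof -
  let ?E = "graph_slab (cbox 0 (\<chi> j. v0 $ j + u)) f (- \<delta>) \<delta> 0 1"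
  note diff = naive_relax_persp_relax_diff_subset[OF assms]
  have "0 \<le> \<delta>"
    using gap[of 1 0] by simp
  have f': "continuous_on (cbox 0 (\<chi> j. v0 $ j + u)) f"
    using f(1) by (rule continuous_on_subset) simp
  have E: "compact ?E"
    by (intro compact_graph_slab compact_cbox f')
  have N: "compact (naive_relax f v0 u)"
    by (rule compact_naive_relax[OF v0 u f(1)])
  have "compact ((naive_relax f v0 u \<union> ?E) \<inter> persp_relax f v0 u)"
    by (intro compact_Int_closed compact_Un N E) (simp add: persp_relax_def)
  moreover have "(naive_relax f v0 u \<union> ?E) \<inter> persp_relax f v0 u = persp_relax f v0 u"
    using diff(2) by blast
  ultimately have P: "compact (persp_relax f v0 u)"
    by simp
  have "\<bar>measure lborel (naive_relax f v0 u) - measure lborel (persp_relax f v0 u)\<bar> \<le> measure lborel ?E"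
    using diff by (intro abs_measure_diff_le fmeasurable_compact N P E)
  also have "\<dots> = 2 * \<delta> * measure lborel (cbox 0 (\<chi> j. v0 $ j + u))"
    using \<open>0 \<le> \<delta>\<close> by (simp add: measure_graph_slab[OF compact_cbox f'])
  finally show ?thesis .
qed

lemma measure_cbox_le_power_sum:
  fixes v0 :: "real ^ 'n"
  assumes "\<forall>j. 0 \<le> v0 $ j" "0 \<le> u"
  shows "measure lborel (cbox 0 (\<chi> j. v0 $ j + u)) \<le> ((\<Sum>j\<in>UNIV. v0 $ j) + u) ^ CARD('n)"
proof -
  have "cbox 0 (\<chi> j. v0 $ j + u) \<noteq> {}"
    using assms by (simp add: interval_eq_empty_cart not_less add_nonneg_nonneg)
  then have "measure lborel (cbox 0 (\<chi> j. v0 $ j + u)) = (\<Prod>j\<in>UNIV. v0 $ j + u)"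
    by (simp add: content_cbox_cart)
  also have "\<dots> \<le> (\<Prod>j\<in>(UNIV :: 'n set). (\<Sum>j\<in>UNIV. v0 $ j) + u)"
    using assms by (intro prod_mono) (auto intro: member_le_sum)
  finally show ?thesis
    by simp
qed

lemma lme_measure_diff_le:
  fixes v0 :: "real ^ 'n"
  assumes "\<forall>j. 0 \<le> v0 $ j" "0 < u"
  shows "\<bar>measure lborel (naive_relax lme v0 u) - measure lborel (persp_relax lme v0 u)\<bar>
    \<le> 2 * ln (real CARD('n)) * ((\<Sum>j\<in>UNIV. v0 $ j) + u) ^ CARD('n)"
proof -
  have "\<bar>measure lborel (naive_relax lme v0 u) - measure lborel (persp_relax lme v0 u)\<bar>
    \<le> 2 * ln (real CARD('n)) * measure lborel (cbox 0 (\<chi> j. v0 $ j + u))"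
    using assms lme_perspective_close
    by (intro naive_relax_persp_relax_measure_diff_le continuous_on_lme) auto
  also have "\<dots> \<le> 2 * ln (real CARD('n)) * ((\<Sum>j\<in>UNIV. v0 $ j) + u) ^ CARD('n)"
    using assms by (intro mult_left_mono measure_cbox_le_power_sum) auto
  finally show ?thesis .
qed

lemma interp_slope_lme_ge:
  fixes v0 :: "real ^ 'n"
  assumes "\<forall>j. 0 \<le> v0 $ j" "0 < u"
  shows "1 - (ln (real CARD('n)) + (\<Sum>j\<in>UNIV. v0 $ j)) / u \<le> interp_slope lme v0 u $ j"
proof -
  have "(v0 + u *\<^sub>R axis j 1) $ j - ln (real CARD('n)) \<le> lme (v0 + u *\<^sub>R axis j 1)"
    by (rule component_le_lme)
  moreover have "lme v0 \<le> (\<Sum>j\<in>UNIV. v0 $ j)"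
    using assms(1) by (intro lme_le member_le_sum) auto
  ultimately have "u - (ln (real CARD('n)) + (\<Sum>j\<in>UNIV. v0 $ j)) \<le> lme (v0 + u *\<^sub>R axis j 1) - lme v0"
    using assms(1) by (simp add: axis_def) (smt (verit))
  then have "(u - (ln (real CARD('n)) + (\<Sum>j\<in>UNIV. v0 $ j))) / u \<le> (lme (v0 + u *\<^sub>R axis j 1) - lme v0) / u"
    using assms(2) by (intro divide_right_mono) auto
  with assms(2) show ?thesis
    by (simp add: interp_slope_def diff_divide_distrib)
qed

lemma neg_ln_card_le_scaled_lme:
  fixes x :: "real ^ 'n"
  assumes "\<forall>j. 0 \<le> x $ j" "0 \<le> z" "z \<le> 1"
  shows "- ln (real CARD('n)) \<le> z * lme x"
proof (cases "0 \<le> lme x")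
  case True
  have "0 \<le> ln (real CARD('n))"
    by simp
  then show ?thesis
    using True assms(2) mult_nonneg_nonneg[of z "lme x"] by linarith
next
  case False
  then have "lme x \<le> z * lme x"
    using assms(2,3) mult_left_le_one_le[of "- lme x" z] by simp
  moreover have "- ln (real CARD('n)) \<le> lme x"
    using component_le_lme[of x undefined] assms(1) by (smt (verit))
  ultimately show ?thesis
    by linarith
qed

definition core_cube :: "real ^ 'n \<Rightarrow> real \<Rightarrow> (real ^ 'n) set" where
  "core_cube v0 u =
    cbox (\<chi> j. v0 $ j + 3 * u / (16 * real CARD('n))) (\<chi> j. v0 $ j + u / (4 * real CARD('n)))"

lemma measure_core_cube:
  assumes "0 \<le> u"
  shows "measure lborel (core_cube (v0 :: real ^ 'n) u) = (u / (16 * real CARD('n))) ^ CARD('n)"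
proof -
  have "core_cube v0 u \<noteq> {}"
    using assms by (simp add: core_cube_def interval_eq_empty_cart not_less field_simps)
  then have "measure lborel (core_cube v0 u) = (\<Prod>j\<in>(UNIV :: 'n set). u / (16 * real CARD('n)))"
    by (simp add: core_cube_def content_cbox_cart field_simps)
  then show ?thesis
    by simp
qed

lemma core_cube_coordinate_bounds:
  fixes v0 :: "real ^ 'n"
  assumes "\<forall>j. 0 \<le> v0 $ j" "x \<in> core_cube v0 u" "0 \<le> z" "z \<le> 1"
  shows "3 * u / (16 * real CARD('n)) \<le> x $ j - z * v0 $ j"
    and "x $ j - z * v0 $ j \<le> v0 $ j + u / (4 * real CARD('n))"
proof -
  have "v0 $ j + 3 * u / (16 * real CARD('n)) \<le> x $ j" "x $ j \<le> v0 $ j + u / (4 * real CARD('n))"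
    using assms(2) by (auto simp: core_cube_def mem_box_cart)
  moreover have "0 \<le> z * v0 $ j" "z * v0 $ j \<le> v0 $ j"
    using assms(1,3,4) by (auto intro: mult_left_le_one_le)
  ultimately show "3 * u / (16 * real CARD('n)) \<le> x $ j - z * v0 $ j"
    and "x $ j - z * v0 $ j \<le> v0 $ j + u / (4 * real CARD('n))"
    by linarith+
qed

lemma core_cube_subset_scaleset_simplexJ:
  fixes v0 :: "real ^ 'n"
  assumes v0: "\<forall>j. 0 \<le> v0 $ j" and u: "0 < u" "4 * (\<Sum>j\<in>UNIV. v0 $ j) \<le> u"
    and z: "1 / 2 \<le> z" "z \<le> 1"
  shows "core_cube v0 u \<subseteq> scaleset z (simplexJ v0 u)"
proof
  fix x
  assume x: "x \<in> core_cube v0 u"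
  have "0 \<le> 3 * u / (16 * real CARD('n))" "0 \<le> z"
    using u z by simp_all
  then have lower: "\<forall>j. z * v0 $ j \<le> x $ j"
    using core_cube_coordinate_bounds(1)[OF v0 x] z(2) by (smt (verit))
  have "(\<Sum>j\<in>UNIV. x $ j - z * v0 $ j) \<le> (\<Sum>j\<in>UNIV. v0 $ j + u / (4 * real CARD('n)))"
    using core_cube_coordinate_bounds(2)[OF v0 x, of z] z by (intro sum_mono) auto
  also have "\<dots> = (\<Sum>j\<in>UNIV. v0 $ j) + u / 4"
    by (simp add: sum.distrib)
  also have "\<dots> \<le> z * u"
  proof -
    have "1 / 2 * u \<le> z * u"
      using z(1) u(1) by (intro mult_right_mono) auto
    then show ?thesis
      using u(2) by linarith
  qed
  finally show "x \<in> scaleset z (simplexJ v0 u)"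
    using lower u z by (simp add: mem_scaleset_simplexJ_iff)
qed

lemma interp_slope_lme_inner_ge_on_core_cube:
  fixes v0 :: "real ^ 'n"
  assumes v0: "\<forall>j. 0 \<le> v0 $ j" and u: "ln (real CARD('n)) + (\<Sum>j\<in>UNIV. v0 $ j) \<le> u" "0 < u"
    and x: "x \<in> core_cube v0 u" and z: "0 \<le> z" "z \<le> 1"
  shows "3 * u / 16 - 3 * (ln (real CARD('n)) + (\<Sum>j\<in>UNIV. v0 $ j)) / 16
    \<le> interp_slope lme v0 u \<bullet> (x - z *\<^sub>R v0)"
proof -
  define c where "c = ln (real CARD('n)) + (\<Sum>j\<in>UNIV. v0 $ j)"
  note bounds = core_cube_coordinate_bounds[OF v0 x z]
  have "0 \<le> 3 * u / (16 * real CARD('n))"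
    using u by simp
  then have nonneg: "0 \<le> x $ j - z * v0 $ j" for j
    using bounds(1)[of j] by linarith
  have "3 * u / 16 = (\<Sum>j\<in>(UNIV :: 'n set). 3 * u / (16 * real CARD('n)))"
    by simp
  also have "\<dots> \<le> (\<Sum>j\<in>UNIV. x $ j - z * v0 $ j)"
    using bounds(1) by (intro sum_mono) auto
  finally have sum_ge: "3 * u / 16 \<le> (\<Sum>j\<in>UNIV. x $ j - z * v0 $ j)" .
  have "3 * u / 16 - 3 * c / 16 = (1 - c / u) * (3 * u / 16)"
    using u by (simp add: field_simps)
  also have "\<dots> \<le> (1 - c / u) * (\<Sum>j\<in>UNIV. x $ j - z * v0 $ j)"
    using sum_ge u by (intro mult_left_mono) (auto simp: c_def field_simps)
  also have "\<dots> \<le> (\<Sum>j\<in>UNIV. interp_slope lme v0 u $ j * (x $ j - z * v0 $ j))"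
    unfolding sum_distrib_left c_def
    using interp_slope_lme_ge[OF v0 u(2)] nonneg by (intro sum_mono mult_right_mono) auto
  also have "\<dots> = interp_slope lme v0 u \<bullet> (x - z *\<^sub>R v0)"
    by (simp add: inner_vec_def)
  finally show ?thesis
    by (simp add: c_def)
qed

text \<open>The bound on \<open>lme\<close> over the cube needs \<open>d \<ge> 2\<close>; for \<open>d = 1\<close> the interpolant is \<open>lme\<close> itself.\<close>
lemma lme_le_homog_affine_interp_on_core_cube:
  fixes v0 :: "real ^ 'n"
  assumes v0: "\<forall>j. 0 \<le> v0 $ j" and d: "2 \<le> CARD('n)"
    and u: "40 * ((\<Sum>j\<in>UNIV. v0 $ j) + ln (real CARD('n)) + 1) \<le> u"
    and x: "x \<in> core_cube v0 u" and z: "1 / 2 \<le> z" "z \<le> 1"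
  shows "lme x + u / 32 \<le> homog (affine_interp lme v0 u) x z"
proof -
  define n where "n = real CARD('n)"
  define V where "V = (\<Sum>j\<in>UNIV. v0 $ j)"
  define l where "l = ln n"
  have "2 \<le> n" "0 \<le> l" "0 \<le> V"
    using d v0 by (auto simp: n_def l_def V_def sum_nonneg)
  have u: "40 * V + 40 * l + 40 \<le> u"
    using u by (simp add: V_def l_def n_def algebra_simps)
  then have "0 < u" "l + V \<le> u"
    using \<open>0 \<le> l\<close> \<open>0 \<le> V\<close> by linarith+
  have "lme x \<le> V + u / 8"
  proof (rule lme_le)
    fix j
    have "v0 $ j \<le> V"
      unfolding V_def using v0 by (intro member_le_sum) auto
    moreover have "u / (4 * n) \<le> u / 8"
      using \<open>2 \<le> n\<close> \<open>0 < u\<close> by (simp add: field_simps)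
    moreover have "x $ j \<le> v0 $ j + u / (4 * n)"
      using x by (auto simp: core_cube_def mem_box_cart n_def)
    ultimately show "x $ j \<le> V + u / 8"
      by linarith
  qed
  moreover have "V + u / 8 + u / 32 \<le> 3 * u / 16 - 3 * (l + V) / 16 - l"
    using u \<open>0 \<le> V\<close> \<open>0 \<le> l\<close> by (simp add: field_simps)
  moreover have "3 * u / 16 - 3 * (l + V) / 16 \<le> interp_slope lme v0 u \<bullet> (x - z *\<^sub>R v0)"
    using interp_slope_lme_inner_ge_on_core_cube[OF v0 _ \<open>0 < u\<close> x] \<open>l + V \<le> u\<close> z
    by (simp add: l_def n_def V_def)
  moreover have "- l \<le> z * lme v0"
    using neg_ln_card_le_scaled_lme[OF v0] z by (simp add: l_def n_def)
  ultimately show ?thesis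
    using \<open>0 < u\<close> by (simp add: homog_affine_interp)
qed

lemma graph_slab_core_cube_subset_naive_relax:
  fixes v0 :: "real ^ 'n"
  assumes v0: "\<forall>j. 0 \<le> v0 $ j" and d: "2 \<le> CARD('n)"
    and u: "40 * ((\<Sum>j\<in>UNIV. v0 $ j) + ln (real CARD('n)) + 1) \<le> u"
  shows "graph_slab (core_cube v0 u) lme 0 (u / 32) (1 / 2) 1 \<subseteq> naive_relax lme v0 u"
proof safe
  fix x y z
  assume "(x, y, z) \<in> graph_slab (core_cube v0 u) lme 0 (u / 32) (1 / 2) 1"
  then have x: "x \<in> core_cube v0 u" and "lme x \<le> y" "y \<le> lme x + u / 32" and z: "1 / 2 \<le> z" "z \<le> 1"
    by (auto simp: graph_slab_def)
  have "0 \<le> (\<Sum>j\<in>UNIV. v0 $ j)" "0 \<le> ln (real CARD('n))"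
    using v0 by (auto intro: sum_nonneg)
  with u have "0 < u" "4 * (\<Sum>j\<in>UNIV. v0 $ j) \<le> u"
    by (smt (verit))+
  then have "x \<in> scaleset z (simplexJ v0 u)"
    using core_cube_subset_scaleset_simplexJ[OF v0 _ _ z] x by blast
  then show "(x, y, z) \<in> naive_relax lme v0 u"
    using lme_le_homog_affine_interp_on_core_cube[OF v0 d u x z] \<open>lme x \<le> y\<close> \<open>y \<le> lme x + u / 32\<close> z
    by (simp add: naive_relax_def)
qed

lemma measure_naive_relax_lme_ge:
  fixes v0 :: "real ^ 'n"
  assumes v0: "\<forall>j. 0 \<le> v0 $ j" and d: "2 \<le> CARD('n)"
    and u: "40 * ((\<Sum>j\<in>UNIV. v0 $ j) + ln (real CARD('n)) + 1) \<le> u"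
  shows "(u / (16 * real CARD('n))) ^ CARD('n) * (u / 64) \<le> measure lborel (naive_relax lme v0 u)"
proof -
  let ?L = "graph_slab (core_cube v0 u) lme 0 (u / 32) (1 / 2) 1"
  have "0 \<le> (\<Sum>j\<in>UNIV. v0 $ j)" "0 \<le> ln (real CARD('n))"
    using v0 by (auto intro: sum_nonneg)
  with u have "0 < u"
    by (smt (verit))
  have cube: "compact (core_cube v0 u)"
    by (simp add: core_cube_def)
  have "measure lborel ?L = (u / (16 * real CARD('n))) ^ CARD('n) * (u / 64)"
    using \<open>0 < u\<close> by (simp add: measure_graph_slab[OF cube continuous_on_lme] measure_core_cube)
  moreover have "?L \<in> sets lborel"
    by (intro fmeasurableD fmeasurable_compact compact_graph_slab cube continuous_on_lme)
  then have "measure lborel ?L \<le> measure lborel (naive_relax lme v0 u)"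
    by (intro measure_mono_fmeasurable graph_slab_core_cube_subset_naive_relax[OF v0 d u]
        fmeasurable_compact compact_naive_relax[OF v0 \<open>0 < u\<close> continuous_on_lme])
  ultimately show ?thesis
    by simp
qed

lemma lme_relaxation_gap_ratio_le:
  fixes v0 :: "real ^ 'n"
  assumes v0: "\<forall>j. 0 \<le> v0 $ j" and d: "2 \<le> CARD('n)"
    and u: "40 * ((\<Sum>j\<in>UNIV. v0 $ j) + ln (real CARD('n)) + 1) \<le> u"
  shows "\<bar>(measure lborel (naive_relax lme v0 u) - measure lborel (persp_relax lme v0 u))
      / measure lborel (naive_relax lme v0 u)\<bar>
    \<le> 128 * ln (real CARD('n)) * (16 * real CARD('n)) ^ CARD('n)
      * (1 + (\<Sum>j\<in>UNIV. v0 $ j) / u) ^ CARD('n) / u"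
proof -
  define N where "N = measure lborel (naive_relax lme v0 u)"
  define P where "P = measure lborel (persp_relax lme v0 u)"
  define n where "n = real CARD('n)"
  define V where "V = (\<Sum>j\<in>UNIV. v0 $ j)"
  have "0 \<le> V" "0 \<le> ln n"
    using v0 by (auto simp: V_def n_def intro: sum_nonneg)
  with u have "0 < u"
    unfolding V_def n_def by (smt (verit))
  have "0 < n"
    by (simp add: n_def)
  have low: "(u / (16 * n)) ^ CARD('n) * (u / 64) \<le> N"
    using measure_naive_relax_lme_ge[OF v0 d u] by (simp add: N_def n_def)
  moreover have pos: "0 < (u / (16 * n)) ^ CARD('n) * (u / 64)"
    using \<open>0 < u\<close> \<open>0 < n\<close> by simp
  ultimately have "\<bar>(N - P) / N\<bar> = \<bar>N - P\<bar> / N"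
    by simp
  also have "\<dots> \<le> 2 * ln n * (V + u) ^ CARD('n) / ((u / (16 * n)) ^ CARD('n) * (u / 64))"
    using lme_measure_diff_le[OF v0 \<open>0 < u\<close>] low pos \<open>0 \<le> ln n\<close> \<open>0 \<le> V\<close> \<open>0 < u\<close>
    by (intro frac_le) (simp_all add: N_def P_def V_def n_def)
  also have "\<dots> = 128 * ln n * (16 * n) ^ CARD('n) * (1 + V / u) ^ CARD('n) / u"
  proof -
    have "(V + u) ^ CARD('n) = u ^ CARD('n) * (1 + V / u) ^ CARD('n)"
      using \<open>0 < u\<close> by (simp add: power_mult_distrib[symmetric] field_simps)
    then show ?thesis
      using \<open>0 < u\<close> \<open>0 < n\<close> by (simp add: power_divide field_simps)
  qed
  finally show ?thesis
    by (simp add: N_def P_def V_def n_def)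
qed

lemma tendsto_power_div_at_top:
  "((\<lambda>u::real. C * (1 + V / u) ^ k / u) \<longlongrightarrow> 0) at_top"
proof -
  have "((\<lambda>u::real. C * (1 + V * inverse u) ^ k * inverse u) \<longlongrightarrow> C * (1 + V * 0) ^ k * 0) at_top"
    by (intro tendsto_intros tendsto_inverse_0_at_top filterlim_ident)
  then show ?thesis
    by (simp add: divide_inverse)
qed

theorem theorem16:
  fixes v0 :: "real ^ 'n"
  assumes "\<forall>j. 0 \<le> v0 $ j" and "v0 \<noteq> 0"
  shows "((\<lambda>u. (measure lborel (naive_relax lme v0 u) - measure lborel (persp_relax lme v0 u))
               / measure lborel (naive_relax lme v0 u)) \<longlongrightarrow> 0) at_top"
proof (cases "CARD('n) = 1")
  case True
  have "\<forall>\<^sub>F u in at_top. (measure lborel (naive_relax lme v0 u) - measure lborel (persp_relax lme v0 u))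
      / measure lborel (naive_relax lme v0 u) = 0"
    using eventually_gt_at_top[of 0] by eventually_elim (use lme_measure_diff_le[OF assms(1)] True in simp)
  then show ?thesis
    by (rule tendsto_eventually)
next
  case False
  then have d: "2 \<le> CARD('n)"
    using zero_less_card_finite[where 'a='n] by linarith
  let ?V = "\<Sum>j\<in>UNIV. v0 $ j"
  have "\<forall>\<^sub>F u in at_top. norm ((measure lborel (naive_relax lme v0 u) - measure lborel (persp_relax lme v0 u))
      / measure lborel (naive_relax lme v0 u))
    \<le> 128 * ln (real CARD('n)) * (16 * real CARD('n)) ^ CARD('n) * (1 + ?V / u) ^ CARD('n) / u"
    using eventually_ge_at_top[of "40 * (?V + ln (real CARD('n)) + 1)"]
    by eventually_elim (simp only: real_norm_def lme_relaxation_gap_ratio_le[OF assms(1) d])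
  then show ?thesis
    using tendsto_power_div_at_top by (rule Lim_null_comparison)
qed

end
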